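(* There exists a universal constant $C>0$ such that the following holds. Let $0<\varepsilon<1$, $d\in\mathbb{N}$, $t=\lceil C\varepsilon^{-2}\log(2/\varepsilon)\rceil$, and let $G\in\mathbb{R}^{t\times d}$ be a Gaussian JL map. Then for every finite $P\subset\mathbb{R}^d$ with $|P|\ge3$, with probability at least $2/3$, $\operatorname{opt}_{\mathrm{max\text{-}tsp}}(G(P))$ is a $(2+\varepsilon)$-approximation of $\operatorname{opt}_{\mathrm{max\text{-}tsp}}(P)$, i.e. $$\frac{\operatorname{opt}_{\mathrm{max\text{-}tsp}}(P)}{2+\varepsilon}\le\operatorname{opt}_{\mathrm{max\text{-}tsp}}(G(P))\le(2+\varepsilon)\operatorname{opt}_{\mathrm{max\text{-}tsp}}(P).$$
   Context: Norms are Euclidean. A Gaussian JL map is a random $t\times d$ matrix with i.i.d. $\mathcal{N}(0,1/t)$ entries; $G(P)=\{Gp:p\in P\}$. For a finite point set $Q$, $\operatorname{opt}_{\mathrm{max\text{-}tsp}}(Q)$ is the maximum of $\sum_{\{p,q\}\in T}\|p-q\|$ over all Hamiltonian cycles $T$ on $Q$. *)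

theory Defs
  imports "HOL-Probability.Probability"
begin

text \<open>Vectors of R^k are represented as functions nat => real that vanish
  at all coordinates >= k.\<close>

definition vecs :: "nat \<Rightarrow> (nat \<Rightarrow> real) set" where
  "vecs k = {x. \<forall>i\<ge>k. x i = 0}"

definition edist :: "nat \<Rightarrow> (nat \<Rightarrow> real) \<Rightarrow> (nat \<Rightarrow> real) \<Rightarrow> real" where
  "edist k x y = sqrt (\<Sum>i<k. (x i - y i)\<^sup>2)"

definition opt_max_tsp :: "nat \<Rightarrow> (nat \<Rightarrow> real) set \<Rightarrow> real" where
  "opt_max_tsp k Q =
     Max ((\<lambda>f. \<Sum>i<card Q. edist k (f i) (f (Suc i mod card Q)))
            ` {f. bij_betw f {..<card Q} Q})"

definition mat_apply :: "nat \<Rightarrow> nat \<Rightarrow> (nat \<times> nat \<Rightarrow> real) \<Rightarrow> (nat \<Rightarrow> real) \<Rightarrow> (nat \<Rightarrow> real)" where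
  "mat_apply t d G p = (\<lambda>i. if i < t then (\<Sum>j<d. G (i, j) * p j) else 0)"

text \<open>Gaussian JL map: t x d matrix with i.i.d. N(0, 1/t) entries
  (standard deviation 1/sqrt t).\<close>
definition gauss_jl :: "nat \<Rightarrow> nat \<Rightarrow> (nat \<times> nat \<Rightarrow> real) measure" where
  "gauss_jl t d = PiM ({..<t} \<times> {..<d})
      (\<lambda>_. density lborel (normal_density 0 (1 / sqrt (real t))))"

end

theory Submission
  imports Defs "HOL-Combinatorics.Permutations"
begin

text \<open>For an \<open>m\<close>-point set with sum \<open>D\<close> of distances over ordered pairs, the maximum tour lies
  between \<open>D / (m - 1)\<close> and \<open>2 D / m\<close>. The upper bound holds because every tour is at most
  twice the star around any of its points; averaging over the centre gives \<open>2 D / m\<close>. The lower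
  bound is the average length of a tour: by symmetry each pair of distinct positions carries
  every ordered pair of points equally often. Hence if \<open>G\<close> is injective on \<open>P\<close> and preserves
  \<open>D\<close> up to a factor \<open>1 \<plusminus> \<epsilon>/4\<close>, it preserves the optimum up to a factor \<open>2 + \<epsilon>\<close>.

  Injectivity holds almost surely. Since \<open>\<parallel>G x\<parallel>\<^sup>2\<close> has mean \<open>\<parallel>x\<parallel>\<^sup>2\<close> and variance
  \<open>2 \<parallel>x\<parallel>\<^sup>4 / t\<close>, one gets \<open>E \<bar>\<parallel>G x\<parallel> - \<parallel>x\<parallel>\<bar> \<le> sqrt (2 / t) \<parallel>x\<parallel>\<close>, and Markov's inequality
  for the total deviation of all pairwise distances gives probability \<open>2/3\<close> as soon as
  \<open>t \<ge> 288 / \<epsilon>\<^sup>2\<close>.\<close>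

section \<open>Maximum TSP and the sum of pairwise distances\<close>

lemma edist_nonneg: "0 \<le> edist k x y"
  by (simp add: edist_def sum_nonneg)

lemma edist_self [simp]: "edist k x x = 0"
  by (simp add: edist_def)

lemma edist_commute: "edist k x y = edist k y x"
  unfolding edist_def by (simp add: power2_commute)

lemma edist_triangle: "edist k x z \<le> edist k x y + edist k y z"
proof -
  have "edist k x z = L2_set (\<lambda>i. (x i - y i) + (y i - z i)) {..<k}"
    by (simp add: edist_def L2_set_def)
  also have "\<dots> \<le> L2_set (\<lambda>i. x i - y i) {..<k} + L2_set (\<lambda>i. y i - z i) {..<k}"
    by (rule L2_set_triangle_ineq)
  finally show ?thesis
    by (simp add: edist_def L2_set_def)
qed

definition tour_length :: "nat \<Rightarrow> nat \<Rightarrow> (nat \<Rightarrow> nat \<Rightarrow> real) \<Rightarrow> real" where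
  "tour_length k m f = (\<Sum>i<m. edist k (f i) (f (Suc i mod m)))"

definition tours :: "(nat \<Rightarrow> real) set \<Rightarrow> (nat \<Rightarrow> nat \<Rightarrow> real) set" where
  "tours Q = {f \<in> {..<card Q} \<rightarrow>\<^sub>E Q. bij_betw f {..<card Q} Q}"

definition dist_sum :: "nat \<Rightarrow> (nat \<Rightarrow> real) set \<Rightarrow> real" where
  "dist_sum k Q = (\<Sum>p\<in>Q. \<Sum>q\<in>Q. edist k p q)"

lemma tour_length_nonneg: "0 \<le> tour_length k m f"
  unfolding tour_length_def by (intro sum_nonneg) (simp add: edist_nonneg)

lemma tour_length_cong: "(\<And>i. i < m \<Longrightarrow> f i = g i) \<Longrightarrow> tour_length k m f = tour_length k m g"
  unfolding tour_length_def by (intro sum.cong refl) auto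

lemma tour_length_restrict [simp]: "tour_length k m (restrict f {..<m}) = tour_length k m f"
  by (intro tour_length_cong) simp

lemma dist_sum_nonneg: "0 \<le> dist_sum k Q"
  unfolding dist_sum_def by (intro sum_nonneg) (simp add: edist_nonneg)

lemma finite_tours: "finite Q \<Longrightarrow> finite (tours Q)"
  unfolding tours_def by (rule finite_subset[of _ "{..<card Q} \<rightarrow>\<^sub>E Q"]) (auto intro: finite_PiE)

lemma restrict_in_tours: "bij_betw f {..<card Q} Q \<Longrightarrow> restrict f {..<card Q} \<in> tours Q"
  unfolding tours_def by (auto simp: bij_betw_def inj_on_def)

lemma tours_nonempty: "finite Q \<Longrightarrow> tours Q \<noteq> {}"
  using ex_bij_betw_nat_finite[of Q] restrict_in_tours[of _ Q] by (auto simp: atLeast0LessThan)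

lemma opt_max_tsp_eq_Max_tours: "opt_max_tsp k Q = Max (tour_length k (card Q) ` tours Q)"
proof -
  have img: "tour_length k (card Q) ` {f. bij_betw f {..<card Q} Q} = tour_length k (card Q) ` tours Q"
  proof
    show "tour_length k (card Q) ` {f. bij_betw f {..<card Q} Q} \<subseteq> tour_length k (card Q) ` tours Q"
    proof (clarsimp)
      fix f assume f: "bij_betw f {..<card Q} Q"
      have "tour_length k (card Q) f = tour_length k (card Q) (restrict f {..<card Q})"
        by simp
      then show "tour_length k (card Q) f \<in> tour_length k (card Q) ` tours Q"
        using restrict_in_tours[OF f] by blast
    qed
    show "tour_length k (card Q) ` tours Q \<subseteq> tour_length k (card Q) ` {f. bij_betw f {..<card Q} Q}"
      by (rule image_mono) (auto simp only: tours_def mem_Collect_eq)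
  qed
  have "opt_max_tsp k Q = Max (tour_length k (card Q) ` {f. bij_betw f {..<card Q} Q})"
    by (simp only: opt_max_tsp_def tour_length_def[abs_def])
  then show ?thesis
    unfolding img .
qed

lemma opt_max_tsp_ge_tour_length:
  "finite Q \<Longrightarrow> f \<in> tours Q \<Longrightarrow> tour_length k (card Q) f \<le> opt_max_tsp k Q"
  by (simp add: opt_max_tsp_eq_Max_tours finite_tours)

lemma sum_rotate_mod:
  fixes g :: "nat \<Rightarrow> 'a::comm_monoid_add"
  shows "(\<Sum>i<m. g (Suc i mod m)) = (\<Sum>i<m. g i)"
proof (cases m)
  case (Suc n)
  have "(\<Sum>i<Suc n. g (Suc i mod Suc n)) = (\<Sum>i<n. g (Suc i)) + g 0"
    by (simp add: sum.lessThan_Suc)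
  also have "\<dots> = (\<Sum>i<Suc n. g i)"
    by (simp only: sum.lessThan_Suc_shift add.commute)
  finally show ?thesis using Suc by simp
qed simp

lemma tour_length_le_star:
  assumes f: "bij_betw f {..<card Q} Q"
  shows "tour_length k (card Q) f \<le> 2 * (\<Sum>q\<in>Q. edist k q c)"
proof -
  let ?m = "card Q"
  have "tour_length k ?m f \<le> (\<Sum>i<?m. edist k (f i) c + edist k (f (Suc i mod ?m)) c)"
    unfolding tour_length_def by (intro sum_mono) (metis edist_commute edist_triangle)
  also have "\<dots> = 2 * (\<Sum>i<?m. edist k (f i) c)"
    by (simp add: sum.distrib sum_rotate_mod[of "\<lambda>i. edist k (f i) c"])
  also have "(\<Sum>i<?m. edist k (f i) c) = (\<Sum>q\<in>Q. edist k q c)"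
    by (rule sum.reindex_bij_betw[OF f])
  finally show ?thesis .
qed

lemma opt_max_tsp_le_dist_sum:
  assumes "finite Q" "Q \<noteq> {}"
  shows "opt_max_tsp k Q \<le> 2 * dist_sum k Q / card Q"
proof -
  have "tour_length k (card Q) f \<le> 2 * dist_sum k Q / card Q" if f: "f \<in> tours Q" for f
  proof -
    have "card Q * tour_length k (card Q) f \<le> (\<Sum>c\<in>Q. 2 * (\<Sum>q\<in>Q. edist k q c))"
      using sum_mono[of Q "\<lambda>_. tour_length k (card Q) f"] tour_length_le_star f
      by (simp add: tours_def)
    also have "\<dots> = 2 * dist_sum k Q"
      unfolding dist_sum_def sum_distrib_left[symmetric] by (subst sum.swap) (rule refl)
    moreover have "0 < card Q"
      using assms by (simp add: card_gt_0_iff)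
    ultimately show ?thesis
      by (simp add: pos_le_divide_eq mult.commute)
  qed
  then show ?thesis
    using assms by (simp add: opt_max_tsp_eq_Max_tours finite_tours tours_nonempty)
qed

lemma exists_permutes_0_1:
  fixes a b m :: nat
  assumes "a < m" "b < m" "a \<noteq> b"
  obtains s where "s permutes {..<m}" "s 0 = a" "s 1 = b"
proof
  define s1 where "s1 = Transposition.transpose a 0"
  have "0 < m" "1 < m"
    using assms by linarith+
  have "s1 b \<noteq> 0" "s1 b < m"
    using assms by (auto simp: s1_def Transposition.transpose_def)
  moreover have "s1 permutes {..<m}"
    unfolding s1_def using assms by (intro permutes_swap_id) auto
  ultimately show "s1 \<circ> Transposition.transpose 1 (s1 b) permutes {..<m}"
    using \<open>1 < m\<close> by (intro permutes_compose permutes_swap_id) auto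
  show "(s1 \<circ> Transposition.transpose 1 (s1 b)) 0 = a"
    using \<open>s1 b \<noteq> 0\<close> by (simp add: s1_def)
  show "(s1 \<circ> Transposition.transpose 1 (s1 b)) 1 = b"
    by (simp add: s1_def)
qed

lemma bij_betw_tours_permute:
  assumes Q: "finite Q" and s: "s permutes {..<card Q}"
  shows "bij_betw (\<lambda>f. restrict (f \<circ> s) {..<card Q}) (tours Q) (tours Q)"
proof -
  define F :: "(nat \<Rightarrow> nat \<Rightarrow> real) \<Rightarrow> nat \<Rightarrow> nat \<Rightarrow> real"
    where "F f = restrict (f \<circ> s) {..<card Q}" for f
  have s_bij: "bij_betw s {..<card Q} {..<card Q}"
    using s by (rule permutes_imp_bij)
  have maps: "F ` tours Q \<subseteq> tours Q"
  proof (rule image_subsetI)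
    fix f assume "f \<in> tours Q"
    then have "bij_betw f {..<card Q} Q"
      by (simp add: tours_def)
    then have "bij_betw (f \<circ> s) {..<card Q} Q"
      by (rule bij_betw_trans[OF s_bij])
    then show "F f \<in> tours Q"
      unfolding F_def by (rule restrict_in_tours)
  qed
  have "inj_on F (tours Q)"
  proof (rule inj_onI)
    fix f g assume fg: "f \<in> tours Q" "g \<in> tours Q" "F f = F g"
    show "f = g"
    proof (rule extensionalityI)
      show "f \<in> extensional {..<card Q}" "g \<in> extensional {..<card Q}"
        using fg(1,2) by (simp_all add: tours_def PiE_def)
      fix i assume "i \<in> {..<card Q}"
      then have "inv s i < card Q"
        using permutes_in_image[OF permutes_inv[OF s], of i] by simp
      moreover have "s (inv s i) = i"
        by (rule permutes_inverses(1)[OF s])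
      ultimately show "f i = g i"
        using fun_cong[OF fg(3), of "inv s i"] by (simp add: F_def)
    qed
  qed
  then have "bij_betw F (tours Q) (tours Q)"
    using endo_inj_surj[OF finite_tours[OF Q] maps] by (simp add: bij_betw_def)
  then show ?thesis
    by (simp add: F_def[abs_def])
qed

lemma sum_tours_edist_positions:
  assumes Q: "finite Q" and ab: "a < card Q" "b < card Q" "a \<noteq> b"
  shows "(\<Sum>f\<in>tours Q. edist k (f a) (f b)) = (\<Sum>f\<in>tours Q. edist k (f 0) (f 1))"
proof -
  obtain s where s: "s permutes {..<card Q}" "s 0 = a" "s 1 = b"
    using exists_permutes_0_1[OF ab] .
  have "0 < card Q" "1 < card Q" "s (Suc 0) = b"
    using ab s(3) by simp_all
  then show ?thesis
    using sum.reindex_bij_betw[OF bij_betw_tours_permute[OF Q s(1)], of "\<lambda>f. edist k (f 0) (f 1)"]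
    by (simp add: s(2))
qed

lemma sum_tour_length_tours:
  assumes Q: "finite Q" "2 \<le> card Q"
  shows "real (card Q - 1) * (\<Sum>f\<in>tours Q. tour_length k (card Q) f) = card (tours Q) * dist_sum k Q"
proof -
  let ?m = "card Q" and ?T = "tours Q"
  define K where "K = (\<Sum>f\<in>?T. edist k (f 0) (f 1))"
  have succ_ne: "Suc i mod ?m \<noteq> i" if "i < ?m" for i
    using that Q(2) by (cases "Suc i = ?m") auto
  have "(\<Sum>f\<in>?T. tour_length k ?m f) = (\<Sum>i<?m. \<Sum>f\<in>?T. edist k (f i) (f (Suc i mod ?m)))"
    unfolding tour_length_def by (rule sum.swap)
  also have "\<dots> = (\<Sum>i<?m. K)"
    unfolding K_def using succ_ne
    by (intro sum.cong refl sum_tours_edist_positions[OF Q(1)]) (auto simp: eq_commute[of "Suc _ mod _"])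
  finally have tours_sum: "(\<Sum>f\<in>?T. tour_length k ?m f) = ?m * K"
    by simp
  have all_pairs: "(\<Sum>a<?m. \<Sum>b<?m. edist k (f a) (f b)) = dist_sum k Q" if "f \<in> ?T" for f
  proof -
    have f: "bij_betw f {..<?m} Q"
      using that by (simp add: tours_def)
    show ?thesis
      unfolding dist_sum_def sum.reindex_bij_betw[OF f, symmetric] ..
  qed
  have "card ?T * dist_sum k Q = (\<Sum>f\<in>?T. \<Sum>a<?m. \<Sum>b<?m. edist k (f a) (f b))"
    by (simp add: all_pairs)
  also have "\<dots> = (\<Sum>a<?m. \<Sum>b<?m. \<Sum>f\<in>?T. edist k (f a) (f b))"
    by (subst sum.swap, subst (2) sum.swap) (rule refl)
  also have "\<dots> = (\<Sum>a<?m. \<Sum>b\<in>{..<?m} - {a}. \<Sum>f\<in>?T. edist k (f a) (f b))"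
    by (intro sum.cong refl sum.mono_neutral_right) auto
  also have "\<dots> = (\<Sum>a<?m. \<Sum>b\<in>{..<?m} - {a}. K)"
    unfolding K_def by (intro sum.cong refl sum_tours_edist_positions[OF Q(1)]) auto
  also have "\<dots> = ?m * (real (?m - 1) * K)"
    using Q(2) by (simp add: of_nat_diff)
  finally show ?thesis
    unfolding tours_sum by simp
qed

lemma dist_sum_le_opt_max_tsp:
  assumes Q: "finite Q" "2 \<le> card Q"
  shows "dist_sum k Q / (card Q - 1) \<le> opt_max_tsp k Q"
proof -
  have "card (tours Q) * dist_sum k Q \<le> real (card Q - 1) * (card (tours Q) * opt_max_tsp k Q)"
    unfolding sum_tour_length_tours[OF Q, symmetric]
    using opt_max_tsp_ge_tour_length[OF Q(1)] by (intro mult_left_mono sum_bounded_above) auto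
  then have "dist_sum k Q \<le> real (card Q - 1) * opt_max_tsp k Q"
    using finite_tours[OF Q(1)] tours_nonempty[OF Q(1)] by (simp add: mult.left_commute card_gt_0_iff)
  moreover have "0 < real (card Q - 1)"
    using Q(2) by simp
  ultimately show ?thesis
    by (simp add: pos_divide_le_eq mult.commute)
qed

lemma opt_max_tsp_bounds:
  assumes "finite Q" "2 \<le> card Q"
  shows "dist_sum k Q / card Q \<le> opt_max_tsp k Q" "opt_max_tsp k Q \<le> 2 * dist_sum k Q / card Q"
proof -
  have "dist_sum k Q / card Q \<le> dist_sum k Q / (card Q - 1)"
    using assms(2) dist_sum_nonneg by (intro divide_left_mono) auto
  also have "\<dots> \<le> opt_max_tsp k Q"
    by (rule dist_sum_le_opt_max_tsp[OF assms])
  finally show "dist_sum k Q / card Q \<le> opt_max_tsp k Q" .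
  show "opt_max_tsp k Q \<le> 2 * dist_sum k Q / card Q"
    using assms by (intro opt_max_tsp_le_dist_sum) auto
qed

lemma sandwich_ratio_le:
  fixes a b x y \<epsilon> :: real
  assumes a: "x \<le> a" "a \<le> 2 * x" and b: "y \<le> b" "b \<le> 2 * y"
    and xy: "\<bar>y - x\<bar> \<le> \<epsilon> / 4 * x" and \<epsilon>: "0 \<le> \<epsilon>" "\<epsilon> \<le> 2"
  shows "a / (2 + \<epsilon>) \<le> b \<and> b \<le> (2 + \<epsilon>) * a"
proof
  have "0 \<le> x"
    using a by linarith
  have y_bounds: "(1 - \<epsilon> / 4) * x \<le> y" "y \<le> (1 + \<epsilon> / 4) * x"
    using xy abs_le_iff[of "y - x" "\<epsilon> / 4 * x"] by (simp_all add: algebra_simps)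
  have "a / (2 + \<epsilon>) \<le> 2 * x / (2 + \<epsilon>)"
    using a(2) \<epsilon> by (intro divide_right_mono) auto
  also have "\<dots> \<le> (1 - \<epsilon> / 4) * x"
  proof -
    have "\<epsilon> * \<epsilon> \<le> \<epsilon> * 2"
      using \<epsilon> by (intro mult_left_mono) auto
    then have "2 \<le> (2 + \<epsilon>) * (1 - \<epsilon> / 4)"
      by (simp add: algebra_simps)
    then have "2 * x \<le> ((2 + \<epsilon>) * (1 - \<epsilon> / 4)) * x"
      using \<open>0 \<le> x\<close> by (rule mult_right_mono)
    then show ?thesis
      using \<epsilon> by (simp add: pos_divide_le_eq mult.commute mult.left_commute)
  qed
  also have "\<dots> \<le> b"
    using y_bounds(1) b(1) by linarith
  finally show "a / (2 + \<epsilon>) \<le> b" .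
  have "b \<le> (2 + \<epsilon> / 2) * x"
    using b(2) y_bounds(2) by (simp add: algebra_simps)
  also have "\<dots> \<le> (2 + \<epsilon>) * a"
    using \<epsilon> a(1) \<open>0 \<le> x\<close> by (intro mult_mono) auto
  finally show "b \<le> (2 + \<epsilon>) * a" .
qed

lemma opt_max_tsp_approx_of_dist_sum:
  fixes \<epsilon> :: real
  assumes P: "finite P" "2 \<le> card P" and Q: "finite Q" "card Q = card P"
    and \<epsilon>: "0 \<le> \<epsilon>" "\<epsilon> \<le> 2"
    and dev: "\<bar>dist_sum k' Q - dist_sum k P\<bar> \<le> \<epsilon> / 4 * dist_sum k P"
  shows "opt_max_tsp k P / (2 + \<epsilon>) \<le> opt_max_tsp k' Q \<and> opt_max_tsp k' Q \<le> (2 + \<epsilon>) * opt_max_tsp k P"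
proof -
  have "\<bar>dist_sum k' Q / card P - dist_sum k P / card P\<bar> = \<bar>dist_sum k' Q - dist_sum k P\<bar> / card P"
    by (simp add: diff_divide_distrib[symmetric])
  also have "\<dots> \<le> \<epsilon> / 4 * dist_sum k P / card P"
    using dev by (intro divide_right_mono) auto
  finally have "\<bar>dist_sum k' Q / card P - dist_sum k P / card P\<bar> \<le> \<epsilon> / 4 * (dist_sum k P / card P)"
    by simp
  moreover have "2 \<le> card Q"
    using P(2) Q(2) by simp
  ultimately show ?thesis
    using opt_max_tsp_bounds[OF P, of k] opt_max_tsp_bounds[OF Q(1), of k'] \<epsilon>
    by (intro sandwich_ratio_le[where x = "dist_sum k P / card P" and y = "dist_sum k' Q / card P"])
      (simp_all add: Q(2))
qed

section \<open>Measurability of the optimum of a random image\<close>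

lemma bij_betw_comp_onto_image_iff:
  assumes "g ` A \<subseteq> P"
  shows "bij_betw (w \<circ> g) A (w ` P) \<longleftrightarrow> inj_on (w \<circ> g) A \<and> (\<forall>p\<in>P. \<exists>a\<in>A. w (g a) = w p)"
proof -
  have "(w \<circ> g) ` A \<subseteq> w ` P"
    using assms by auto
  moreover have "w ` P \<subseteq> (w \<circ> g) ` A \<longleftrightarrow> (\<forall>p\<in>P. \<exists>a\<in>A. w (g a) = w p)"
    unfolding image_subset_iff image_iff by (metis comp_apply)
  ultimately show ?thesis
    unfolding bij_betw_def by blast
qed

lemma tours_image_lift:
  assumes f: "f \<in> tours (w ` P)"
  obtains g where "g \<in> {..<card (w ` P)} \<rightarrow>\<^sub>E P" "\<And>i. i < card (w ` P) \<Longrightarrow> w (g i) = f i"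
proof
  let ?g = "restrict (inv_into P w \<circ> f) {..<card (w ` P)}"
  have f_in: "f i \<in> w ` P" if "i < card (w ` P)" for i
    using f that by (auto simp: tours_def)
  show "?g \<in> {..<card (w ` P)} \<rightarrow>\<^sub>E P"
    using f_in by (auto simp: inv_into_into)
  show "w (?g i) = f i" if "i < card (w ` P)" for i
    using f_in[OF that] that by (simp add: f_inv_into_f)
qed

lemma Max_eq_Max_if_subset_insert:
  fixes c :: "'a::linorder"
  assumes "finite H" "L \<noteq> {}" "L \<subseteq> H" "H \<subseteq> insert c L" "c \<le> Max L"
  shows "Max H = Max L"
proof (rule antisym)
  have "finite L"
    using assms(1,3) by (rule finite_subset[rotated])
  have "Max H \<in> insert c L"
    using assms(1-4) Max_in[of H] by blast
  then show "Max H \<le> Max L"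
    using \<open>finite L\<close> assms(5) by auto
  show "Max L \<le> Max H"
    by (rule Max_mono[OF assms(3,2,1)])
qed

text \<open>Tours of \<open>w ` P\<close> are indexed, independently of \<open>w\<close>, by sequences \<open>g\<close> in \<open>P\<close>; the dummy
  value \<open>-1\<close> (below every tour length) marks those \<open>g\<close> for which \<open>w \<circ> g\<close> is not a tour. This
  exhibits the optimum of a random image as a finite maximum of measurable functions.\<close>
lemma opt_max_tsp_image_eq_Max:
  assumes P: "finite P"
  shows "opt_max_tsp k (w ` P) =
    Max ((\<lambda>(n, g). if bij_betw (w \<circ> g) {..<n} (w ` P) then tour_length k n (w \<circ> g) else -1)
      ` (SIGMA n:{..card P}. {..<n} \<rightarrow>\<^sub>E P))"
    (is "_ = Max (?H ` ?I)")
proof -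
  let ?Q = "w ` P"
  let ?L = "tour_length k (card ?Q) ` tours ?Q"
  have L_ne: "?L \<noteq> {}"
    using P by (simp add: tours_nonempty)
  have L_sub: "?L \<subseteq> ?H ` ?I"
  proof
    fix y assume "y \<in> ?L"
    then obtain f where f: "f \<in> tours ?Q" and y: "y = tour_length k (card ?Q) f"
      by auto
    obtain g where g: "g \<in> {..<card ?Q} \<rightarrow>\<^sub>E P" and wg: "\<And>i. i < card ?Q \<Longrightarrow> w (g i) = f i"
      using tours_image_lift[OF f] by blast
    have "card ?Q \<le> card P"
      using P by (rule card_image_le)
    moreover have "bij_betw (w \<circ> g) {..<card ?Q} ?Q"
      using f by (subst bij_betw_cong[of _ _ f]) (simp_all add: wg tours_def)
    moreover have "tour_length k (card ?Q) (w \<circ> g) = y"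
      unfolding y by (intro tour_length_cong) (simp add: wg)
    ultimately show "y \<in> ?H ` ?I"
      using g by (intro image_eqI[of _ _ "(card ?Q, g)"]) auto
  qed
  have H_sub: "?H ` ?I \<subseteq> insert (-1) ?L"
  proof
    fix y assume "y \<in> ?H ` ?I"
    then obtain n g where y: "y = ?H (n, g)"
      by auto
    show "y \<in> insert (-1) ?L"
    proof (cases "bij_betw (w \<circ> g) {..<n} ?Q")
      case True
      then have n: "n = card ?Q"
        using bij_betw_same_card by fastforce
      have "y = tour_length k (card ?Q) (restrict (w \<circ> g) {..<card ?Q})"
        using True by (simp add: y n)
      then show ?thesis
        using restrict_in_tours[OF True[unfolded n]] by blast
    qed (simp add: y)
  qed
  obtain f where "f \<in> tours ?Q"
    using L_ne by auto
  then have "tour_length k (card ?Q) f \<le> Max ?L"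
    using P by (simp add: finite_tours)
  then have below: "-1 \<le> Max ?L"
    using tour_length_nonneg[of k "card ?Q" f] by linarith
  have "finite (?H ` ?I)"
    using P by (intro finite_imageI finite_SigmaI finite_PiE) auto
  then have "Max (?H ` ?I) = Max ?L"
    by (rule Max_eq_Max_if_subset_insert[OF _ L_ne L_sub H_sub below])
  then show ?thesis
    by (simp add: opt_max_tsp_eq_Max_tours)
qed

lemma measurable_opt_max_tsp_image:
  assumes P: "finite P"
    and v_meas [measurable]: "\<And>p i. (\<lambda>\<omega>. v \<omega> p i) \<in> borel_measurable M"
    and v_vanish: "\<And>\<omega> p i. k \<le> i \<Longrightarrow> v \<omega> p i = 0"
  shows "(\<lambda>\<omega>. opt_max_tsp k (v \<omega> ` P)) \<in> borel_measurable M"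
proof -
  have eq_iff: "v \<omega> p = v \<omega> q \<longleftrightarrow> (\<forall>i\<in>{..<k}. v \<omega> p i = v \<omega> q i)" for \<omega> p q
    by (metis ext lessThan_iff not_less v_vanish)
  have [measurable]: "{\<omega> \<in> space M. v \<omega> p = v \<omega> q} \<in> sets M" for p q
    unfolding eq_iff by measurable
  have "(\<lambda>\<omega>. if bij_betw (v \<omega> \<circ> g) {..<n} (v \<omega> ` P) then tour_length k n (v \<omega> \<circ> g) else -1)
      \<in> borel_measurable M" if "g \<in> {..<n} \<rightarrow>\<^sub>E P" for n g
  proof -
    have "g ` {..<n} \<subseteq> P"
      using that by auto
    then have "(\<lambda>\<omega>. if bij_betw (v \<omega> \<circ> g) {..<n} (v \<omega> ` P) then tour_length k n (v \<omega> \<circ> g) else -1) =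
      (\<lambda>\<omega>. if (\<forall>a\<in>{..<n}. \<forall>b\<in>{..<n}. v \<omega> (g a) = v \<omega> (g b) \<longrightarrow> a = b)
                \<and> (\<forall>p\<in>P. \<exists>a\<in>{..<n}. v \<omega> (g a) = v \<omega> p)
           then \<Sum>i<n. sqrt (\<Sum>l<k. (v \<omega> (g i) l - v \<omega> (g (Suc i mod n)) l)\<^sup>2) else -1)"
      by (simp add: bij_betw_comp_onto_image_iff inj_on_def tour_length_def edist_def cong: if_cong)
    also have "\<dots> \<in> borel_measurable M"
      using P by measurable
    finally show ?thesis .
  qed
  then show ?thesis
    unfolding opt_max_tsp_image_eq_Max[OF P]
    using P by (intro borel_measurable_Max) (auto intro!: finite_SigmaI finite_PiE)
qed

section \<open>Norms and distances under linear maps\<close>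

definition vec_norm :: "nat \<Rightarrow> (nat \<Rightarrow> real) \<Rightarrow> real" where
  "vec_norm k x = sqrt (\<Sum>j<k. (x j)\<^sup>2)"

lemma vec_norm_nonneg: "0 \<le> vec_norm k x"
  by (simp add: vec_norm_def sum_nonneg)

lemma vec_norm_pos_iff: "0 < vec_norm k x \<longleftrightarrow> (\<exists>j<k. x j \<noteq> 0)"
proof -
  have "(\<Sum>j<k. (x j)\<^sup>2) = 0 \<longleftrightarrow> (\<forall>j\<in>{..<k}. x j = 0)"
    by (simp add: sum_nonneg_eq_0_iff)
  then show ?thesis
    using sum_nonneg[of "{..<k}" "\<lambda>j. (x j)\<^sup>2"] by (auto simp: vec_norm_def less_le)
qed

lemma edist_eq_vec_norm: "edist k p q = vec_norm k (\<lambda>j. p j - q j)"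
  by (simp add: edist_def vec_norm_def)

lemma mat_apply_diff:
  "mat_apply t d G p i - mat_apply t d G q i = mat_apply t d G (\<lambda>j. p j - q j) i"
  by (simp add: mat_apply_def sum_subtractf right_diff_distrib)

lemma edist_mat_apply:
  "edist t (mat_apply t d G p) (mat_apply t d G q) = vec_norm t (mat_apply t d G (\<lambda>j. p j - q j))"
  by (simp add: edist_def vec_norm_def mat_apply_diff)

lemma dist_sum_image_deviation:
  assumes "inj_on w P"
  shows "\<bar>dist_sum k' (w ` P) - dist_sum k P\<bar> \<le> (\<Sum>p\<in>P. \<Sum>q\<in>P. \<bar>edist k' (w p) (w q) - edist k p q\<bar>)"
proof -
  have "dist_sum k' (w ` P) - dist_sum k P = (\<Sum>p\<in>P. \<Sum>q\<in>P. edist k' (w p) (w q) - edist k p q)"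
    by (simp add: dist_sum_def sum.reindex[OF assms] sum_subtractf)
  also have "\<bar>\<dots>\<bar> \<le> (\<Sum>p\<in>P. \<bar>\<Sum>q\<in>P. edist k' (w p) (w q) - edist k p q\<bar>)"
    by (rule sum_abs)
  also have "\<dots> \<le> (\<Sum>p\<in>P. \<Sum>q\<in>P. \<bar>edist k' (w p) (w q) - edist k p q\<bar>)"
    by (intro sum_mono sum_abs)
  finally show ?thesis .
qed

lemma vec_norm_diff_pos:
  assumes "p \<in> vecs d" "q \<in> vecs d" "p \<noteq> q"
  shows "0 < vec_norm d (\<lambda>j. p j - q j)"
proof -
  obtain j where j: "p j \<noteq> q j"
    using assms(3) by auto
  moreover have "j < d"
  proof (rule ccontr)
    assume "\<not> j < d"
    then have "p j = 0" "q j = 0"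
      using assms(1,2) by (simp_all add: vecs_def)
    with j show False
      by simp
  qed
  ultimately show ?thesis
    by (auto simp: vec_norm_pos_iff)
qed

lemma dist_sum_pos:
  assumes "finite P" "P \<subseteq> vecs d" "2 \<le> card P"
  shows "0 < dist_sum d P"
proof -
  obtain p q where pq: "p \<in> P" "q \<in> P" "p \<noteq> q"
    using assms(1,3) card_le_Suc0_iff_eq[OF assms(1)] by (metis not_less_eq_eq numeral_2_eq_2)
  have "0 < edist d p q"
    using pq assms(2) by (auto simp: edist_eq_vec_norm intro: vec_norm_diff_pos)
  also have "edist d p q \<le> (\<Sum>q'\<in>P. edist d p q')"
    using assms(1) pq(2) by (intro member_le_sum) (auto simp: edist_nonneg)
  also have "\<dots> \<le> dist_sum d P"
    unfolding dist_sum_def using assms(1) pq(1)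
    by (intro member_le_sum[of p P "\<lambda>p. \<Sum>q\<in>P. edist d p q"] sum_nonneg) (auto simp: edist_nonneg)
  finally show ?thesis .
qed

section \<open>Moment and tail estimates\<close>

text \<open>AM-GM applied to \<open>\<bar>sqrt Y - a\<bar> \<le> \<bar>Y - a\<^sup>2\<bar> / a\<close>; the square on the right is what makes
  the bound amenable to a second-moment computation.\<close>
lemma abs_sqrt_diff_le:
  fixes a Y \<eta> :: real
  assumes a: "0 < a" and Y: "0 \<le> Y" and \<eta>: "0 < \<eta>"
  shows "\<bar>sqrt Y - a\<bar> \<le> \<eta> * a / 2 + (Y - a\<^sup>2)\<^sup>2 / (2 * \<eta> * a ^ 3)"
proof -
  define z where "z = \<bar>Y - a\<^sup>2\<bar> / a"
  have "\<bar>sqrt Y - a\<bar> * a \<le> \<bar>sqrt Y - a\<bar> * (sqrt Y + a)"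
    using Y by (intro mult_left_mono) auto
  also have "\<dots> = \<bar>(sqrt Y - a) * (sqrt Y + a)\<bar>"
    using Y a by (simp add: abs_mult)
  also have "\<dots> = \<bar>Y - a\<^sup>2\<bar>"
    using Y by (simp add: algebra_simps power2_eq_square)
  finally have "\<bar>sqrt Y - a\<bar> \<le> z"
    using a by (simp add: z_def pos_le_divide_eq)
  also have "z \<le> \<eta> * a / 2 + z\<^sup>2 / (2 * (\<eta> * a))"
  proof -
    have "0 \<le> (z - \<eta> * a)\<^sup>2"
      by simp
    then show ?thesis
      using a \<eta> by (simp add: field_simps power2_eq_square)
  qed
  also have "z\<^sup>2 / (2 * (\<eta> * a)) = (Y - a\<^sup>2)\<^sup>2 / (2 * \<eta> * a ^ 3)"
    using a by (simp add: z_def power_divide power3_eq_cube power2_eq_square)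
  finally show ?thesis .
qed

lemma (in prob_space) normal_moments:
  assumes D: "distributed M lborel X (normal_density 0 \<sigma>)" and \<sigma>: "0 < \<sigma>"
  shows "integrable M (\<lambda>x. X x ^ n)"
    and "expectation (\<lambda>x. X x ^ 2) = \<sigma>\<^sup>2"
    and "expectation (\<lambda>x. X x ^ 4) = 3 * \<sigma> ^ 4"
proof -
  show "integrable M (\<lambda>x. X x ^ n)"
    using integrable_normal_moment[where \<mu>=0 and \<sigma>=\<sigma> and k=n, OF \<sigma>]
    by (simp, subst distributed_integrable[OF D, of "\<lambda>x. x ^ n", symmetric]) auto
  have "expectation (\<lambda>x. X x ^ (2 * 1)) = fact (2 * 1) / ((2 / \<sigma>\<^sup>2) ^ 1 * fact 1)"
    using integral_normal_moment_even[where \<mu>=0 and \<sigma>=\<sigma> and k=1, OF \<sigma>]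
    by (subst distributed_integral[OF D, of "\<lambda>x. x ^ (2 * 1)", symmetric]) auto
  then show "expectation (\<lambda>x. X x ^ 2) = \<sigma>\<^sup>2"
    using \<sigma> by simp
  have "expectation (\<lambda>x. X x ^ (2 * 2)) = fact (2 * 2) / ((2 / \<sigma>\<^sup>2) ^ 2 * fact 2)"
    using integral_normal_moment_even[where \<mu>=0 and \<sigma>=\<sigma> and k=2, OF \<sigma>]
    by (subst distributed_integral[OF D, of "\<lambda>x. x ^ (2 * 2)", symmetric]) auto
  then show "expectation (\<lambda>x. X x ^ 4) = 3 * \<sigma> ^ 4"
    using \<sigma> by (simp add: fact_numeral power_divide field_simps)
qed

lemma (in prob_space) normal_centered_square_moments:
  assumes D: "distributed M lborel X (normal_density 0 \<sigma>)" and \<sigma>: "0 < \<sigma>"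
  shows "integrable M (\<lambda>x. ((X x)\<^sup>2 - \<sigma>\<^sup>2)\<^sup>2)"
    and "expectation (\<lambda>x. (X x)\<^sup>2 - \<sigma>\<^sup>2) = 0"
    and "expectation (\<lambda>x. ((X x)\<^sup>2 - \<sigma>\<^sup>2)\<^sup>2) = 2 * \<sigma> ^ 4"
proof -
  note moments = normal_moments[OF D \<sigma>]
  have square: "((X x)\<^sup>2 - \<sigma>\<^sup>2)\<^sup>2 = X x ^ 4 - 2 * \<sigma>\<^sup>2 * (X x)\<^sup>2 + \<sigma> ^ 4" for x
    by (simp add: power2_eq_square power4_eq_xxxx algebra_simps)
  show "integrable M (\<lambda>x. ((X x)\<^sup>2 - \<sigma>\<^sup>2)\<^sup>2)"
    unfolding square using moments(1) by simp
  show "expectation (\<lambda>x. (X x)\<^sup>2 - \<sigma>\<^sup>2) = 0"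
    using moments by (simp add: prob_space)
  have "expectation (\<lambda>x. ((X x)\<^sup>2 - \<sigma>\<^sup>2)\<^sup>2) = 3 * \<sigma> ^ 4 - 2 * \<sigma>\<^sup>2 * \<sigma>\<^sup>2 + \<sigma> ^ 4"
    unfolding square using moments(1)[of 4] moments(1)[of 2] moments(2,3) by (simp add: prob_space)
  then show "expectation (\<lambda>x. ((X x)\<^sup>2 - \<sigma>\<^sup>2)\<^sup>2) = 2 * \<sigma> ^ 4"
    by (simp add: power2_eq_square power4_eq_xxxx)
qed

lemma (in prob_space) prob_less_ge_two_thirds:
  fixes X :: "'a \<Rightarrow> real"
  assumes X: "integrable M X" "\<And>x. 0 \<le> X x" and c: "0 < c" "expectation X \<le> c / 3"
  shows "2 / 3 \<le> prob {x \<in> space M. X x < c}"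
proof -
  have "prob {x \<in> space M. c \<le> X x} \<le> expectation X / c"
    using X c(1) by (intro integral_Markov_inequality_measure[where A="space M"]) auto
  also have "\<dots> \<le> 1 / 3"
    using c by (simp add: pos_divide_le_eq)
  finally have "prob {x \<in> space M. c \<le> X x} \<le> 1 / 3" .
  moreover have "{x \<in> space M. X x < c} = space M - {x \<in> space M. c \<le> X x}"
    by auto
  moreover have "X \<in> borel_measurable M"
    using X(1) by (rule borel_measurable_integrable)
  ultimately show ?thesis
    by (simp add: prob_compl)
qed

lemma (in prob_space) expectation_square_sum_indep:
  fixes Z :: "'i \<Rightarrow> 'a \<Rightarrow> real"
  assumes I: "finite I" and indep: "indep_vars (\<lambda>_. borel) Z I"
    and sq_int: "\<And>i. i \<in> I \<Longrightarrow> integrable M (\<lambda>x. (Z i x)\<^sup>2)"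
    and centered: "\<And>i. i \<in> I \<Longrightarrow> expectation (Z i) = 0"
  shows "integrable M (\<lambda>x. (\<Sum>i\<in>I. Z i x)\<^sup>2)"
    and "expectation (\<lambda>x. (\<Sum>i\<in>I. Z i x)\<^sup>2) = (\<Sum>i\<in>I. expectation (\<lambda>x. (Z i x)\<^sup>2))"
proof -
  have meas: "Z i \<in> borel_measurable M" if "i \<in> I" for i
    using indep that by (auto simp: indep_vars_def)
  have int: "integrable M (Z i)" if "i \<in> I" for i
    using meas[OF that] sq_int[OF that] by (rule square_integrable_imp_integrable)
  have cross: "integrable M (\<lambda>x. Z i x * Z j x) \<and>
      expectation (\<lambda>x. Z i x * Z j x) = (if i = j then expectation (\<lambda>x. (Z i x)\<^sup>2) else 0)"
    if "i \<in> I" "j \<in> I" for i j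
  proof (cases "i = j")
    case True
    then show ?thesis
      using sq_int[OF that(1)] by (simp add: power2_eq_square)
  next
    case False
    have "indep_vars (\<lambda>_. borel) Z {i, j}"
      using indep by (rule indep_vars_subset) (use that in auto)
    then have "integrable M (\<lambda>x. \<Prod>k\<in>{i, j}. Z k x) \<and>
        expectation (\<lambda>x. \<Prod>k\<in>{i, j}. Z k x) = (\<Prod>k\<in>{i, j}. expectation (Z k))"
      using int that by (intro conjI indep_vars_integrable indep_vars_lebesgue_integral) auto
    then show ?thesis
      using False centered that by simp
  qed
  have square: "(\<Sum>i\<in>I. Z i x)\<^sup>2 = (\<Sum>i\<in>I. \<Sum>j\<in>I. Z i x * Z j x)" for x
    by (simp add: power2_eq_square sum_product)
  show "integrable M (\<lambda>x. (\<Sum>i\<in>I. Z i x)\<^sup>2)"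
    unfolding square using cross by (intro Bochner_Integration.integrable_sum) auto
  have "expectation (\<lambda>x. (\<Sum>i\<in>I. Z i x)\<^sup>2) = (\<Sum>i\<in>I. \<Sum>j\<in>I. expectation (\<lambda>x. Z i x * Z j x))"
    unfolding square using cross
    by (simp add: Bochner_Integration.integral_sum Bochner_Integration.integrable_sum)
  also have "\<dots> = (\<Sum>i\<in>I. \<Sum>j\<in>I. if i = j then expectation (\<lambda>x. (Z i x)\<^sup>2) else 0)"
    using cross by (intro sum.cong refl) simp
  also have "\<dots> = (\<Sum>i\<in>I. expectation (\<lambda>x. (Z i x)\<^sup>2))"
    using I by (simp add: sum.delta')
  finally show "expectation (\<lambda>x. (\<Sum>i\<in>I. Z i x)\<^sup>2) = (\<Sum>i\<in>I. expectation (\<lambda>x. (Z i x)\<^sup>2))" .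
qed

section \<open>Gaussian JL matrices\<close>

lemma prob_space_gauss_jl: "0 < t \<Longrightarrow> prob_space (gauss_jl t d)"
  unfolding gauss_jl_def by (intro prob_space_PiM prob_space_normal_density) auto

locale gauss_jl_matrix =
  fixes t d :: nat
  assumes t_pos: "0 < t"
begin

sublocale prob_space "gauss_jl t d"
  using t_pos by (rule prob_space_gauss_jl)

abbreviation entry_law :: "real measure" where
  "entry_law \<equiv> density lborel (normal_density 0 (1 / sqrt t))"

lemma entry_law_prob_space: "prob_space entry_law"
  using t_pos by (intro prob_space_normal_density) simp

lemma entry_measurable [measurable]: "(\<lambda>G. G k) \<in> borel_measurable (gauss_jl t d)"
proof (cases "k \<in> {..<t} \<times> {..<d}")
  case True
  then have "(\<lambda>G. G k) \<in> measurable (gauss_jl t d) entry_law"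
    unfolding gauss_jl_def by (rule measurable_component_singleton)
  moreover have "sets entry_law = sets borel"
    by simp
  ultimately show ?thesis
    using measurable_cong_sets[OF refl] by blast
next
  case False
  then have "G k = undefined" if "G \<in> space (gauss_jl t d)" for G
    using that by (cases k) (auto simp: gauss_jl_def space_PiM PiE_def extensional_def)
  then show ?thesis
    by (subst measurable_cong[where g="\<lambda>_. undefined"]) auto
qed

lemma distr_entry:
  assumes "k \<in> {..<t} \<times> {..<d}"
  shows "distr (gauss_jl t d) borel (\<lambda>G. G k) = entry_law"
proof -
  have "distr (gauss_jl t d) borel (\<lambda>G. G k) = distr (gauss_jl t d) entry_law (\<lambda>G. G k)"
    by (rule distr_cong) auto
  also have "\<dots> = entry_law"
    unfolding gauss_jl_def using assms entry_law_prob_space by (intro distr_PiM_component) auto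
  finally show ?thesis .
qed

lemma entry_distributed:
  assumes "k \<in> {..<t} \<times> {..<d}"
  shows "distributed (gauss_jl t d) lborel (\<lambda>G. G k) (normal_density 0 (1 / sqrt t))"
proof -
  have "distr (gauss_jl t d) lborel (\<lambda>G. G k) = distr (gauss_jl t d) borel (\<lambda>G. G k)"
    by (rule distr_cong) auto
  then show ?thesis
    using distr_entry[OF assms] by (auto simp: distributed_def measurable_cong_sets[OF refl sets_lborel])
qed

lemma entries_indep: "indep_vars (\<lambda>_. borel) (\<lambda>k G. G k) ({..<t} \<times> {..<d})"
proof (cases "{..<t} \<times> {..<d} = {}")
  case True
  show ?thesis
    by (simp only: True) (simp add: indep_vars_def indep_sets_def)
next
  case False
  let ?I = "{..<t} \<times> {..<d}"
  have "distr (gauss_jl t d) (PiM ?I (\<lambda>_. borel)) (\<lambda>G. \<lambda>k\<in>?I. G k) =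
      distr (gauss_jl t d) (gauss_jl t d) (\<lambda>G. G)"
    by (rule distr_cong) (auto simp: gauss_jl_def space_PiM intro!: sets_PiM_cong)
  also have "\<dots> = PiM ?I (\<lambda>k. distr (gauss_jl t d) borel (\<lambda>G. G k))"
    by (simp add: gauss_jl_def[of t d] distr_entry[unfolded gauss_jl_def] cong: PiM_cong)
  finally show ?thesis
    using False by (subst indep_vars_iff_distr_eq_PiM') auto
qed

lemma blocks_indep:
  assumes K: "\<And>l. l \<in> L \<Longrightarrow> K l \<subseteq> {..<t} \<times> {..<d}" and disj: "disjoint_family_on K L"
    and Y: "\<And>l. l \<in> L \<Longrightarrow> Y l \<in> borel_measurable (PiM (K l) (\<lambda>_. borel))"
    and Z: "\<And>l G. l \<in> L \<Longrightarrow> Z l G = Y l (restrict G (K l))"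
  shows "indep_vars (\<lambda>_. borel) Z L"
proof -
  have "indep_vars (\<lambda>l. PiM (K l) (\<lambda>_. borel)) (\<lambda>l G. restrict (\<lambda>k. G k) (K l)) L"
    using indep_vars_restrict[OF entries_indep K disj] .
  then have "indep_vars (\<lambda>_. borel) (\<lambda>l G. Y l (restrict (\<lambda>k. G k) (K l))) L"
    by (rule indep_vars_compose2) (rule Y)
  then show ?thesis
    by (rule iffD1[OF indep_vars_cong, rotated 3]) (auto simp: Z fun_eq_iff)
qed

lemma mat_apply_measurable [measurable]: "(\<lambda>G. mat_apply t d G x i) \<in> borel_measurable (gauss_jl t d)"
  unfolding mat_apply_def by measurable


lemma row_distributed:
  assumes i: "i < t" and x: "0 < vec_norm d x"
  shows "distributed (gauss_jl t d) lborel (\<lambda>G. mat_apply t d G x i)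
    (normal_density 0 (vec_norm d x / sqrt t))"
proof -
  define J where "J = {j. j < d \<and> x j \<noteq> 0}"
  have J: "finite J" "J \<noteq> {}"
    using x by (auto simp: J_def vec_norm_pos_iff)
  have row_eq: "(\<lambda>G. mat_apply t d G x i) = (\<lambda>G. \<Sum>j\<in>J. x j * G (i, j))"
  proof
    fix G
    have "mat_apply t d G x i = (\<Sum>j<d. x j * G (i, j))"
      using i by (simp add: mat_apply_def mult.commute)
    also have "\<dots> = (\<Sum>j\<in>J. x j * G (i, j))"
      unfolding J_def by (rule sum.mono_neutral_right) auto
    finally show "mat_apply t d G x i = (\<Sum>j\<in>J. x j * G (i, j))" .
  qed
  have indep: "indep_vars (\<lambda>_. borel) (\<lambda>j G. x j * G (i, j)) J"
    by (rule blocks_indep[where K="\<lambda>j. {(i, j)}" and Y="\<lambda>j h. x j * h (i, j)"])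
      (use i in \<open>auto simp: J_def disjoint_family_on_def\<close>)
  have summand: "distributed (gauss_jl t d) lborel (\<lambda>G. x j * G (i, j))
      (normal_density 0 (\<bar>x j\<bar> * (1 / sqrt t)))" if "j \<in> J" for j
  proof -
    have "(i, j) \<in> {..<t} \<times> {..<d}" "x j \<noteq> 0"
      using i that by (auto simp: J_def)
    moreover have "0 < 1 / sqrt (real t)"
      using t_pos by simp
    ultimately show ?thesis
      using normal_density_affine[OF entry_distributed, of "(i, j)" "x j" 0] by simp
  qed
  have "distributed (gauss_jl t d) lborel (\<lambda>G. \<Sum>j\<in>J. x j * G (i, j))
      (normal_density (\<Sum>j\<in>J. 0) (sqrt (\<Sum>j\<in>J. (\<bar>x j\<bar> * (1 / sqrt t))\<^sup>2)))"
    using J indep summand t_pos by (intro sum_indep_normal) (auto simp: J_def)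
  moreover have "(\<Sum>j\<in>J. (\<bar>x j\<bar> * (1 / sqrt t))\<^sup>2) = (\<Sum>j<d. (x j)\<^sup>2) / t"
    unfolding sum_divide_distrib J_def using t_pos
    by (intro sum.mono_neutral_cong_left) (auto simp: power_mult_distrib power_divide)
  ultimately show ?thesis
    using t_pos by (simp add: row_eq vec_norm_def real_sqrt_divide)
qed

lemma rows_indep:
  assumes "\<And>i. i < t \<Longrightarrow> f i \<in> borel_measurable borel"
  shows "indep_vars (\<lambda>_. borel) (\<lambda>i G. f i (mat_apply t d G x i)) {..<t}"
proof (rule blocks_indep[where K="\<lambda>i. {i} \<times> {..<d}" and Y="\<lambda>i h. f i (\<Sum>j<d. h (i, j) * x j)"])
  show "\<And>i. i \<in> {..<t} \<Longrightarrow> (\<lambda>h. f i (\<Sum>j<d. h (i, j) * x j)) \<in> borel_measurable (PiM ({i} \<times> {..<d}) (\<lambda>_. borel))"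
    using assms by measurable
qed (auto simp: disjoint_family_on_def mat_apply_def)

text \<open>\<open>\<parallel>G x\<parallel>\<^sup>2\<close> is a sum of \<open>t\<close> independent squares of \<open>N(0, \<parallel>x\<parallel>\<^sup>2 / t)\<close> variables, each with
  variance \<open>2 \<parallel>x\<parallel>\<^sup>4 / t\<^sup>2\<close>.\<close>
lemma sq_norm_variance:
  assumes x: "0 < vec_norm d x"
  shows "integrable (gauss_jl t d) (\<lambda>G. ((vec_norm t (mat_apply t d G x))\<^sup>2 - (vec_norm d x)\<^sup>2)\<^sup>2)"
    and "expectation (\<lambda>G. ((vec_norm t (mat_apply t d G x))\<^sup>2 - (vec_norm d x)\<^sup>2)\<^sup>2) =
      2 * vec_norm d x ^ 4 / t"
proof -
  define \<sigma> where "\<sigma> = vec_norm d x / sqrt t"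
  have \<sigma>: "0 < \<sigma>" "t * \<sigma>\<^sup>2 = (vec_norm d x)\<^sup>2"
    using x t_pos by (simp_all add: \<sigma>_def power_divide)
  define Z where "Z i G = (mat_apply t d G x i)\<^sup>2 - \<sigma>\<^sup>2" for i G
  note Z_moments = normal_centered_square_moments[OF row_distributed[OF _ x, folded \<sigma>_def] \<sigma>(1),
      folded Z_def]
  have Z_indep: "indep_vars (\<lambda>_. borel) Z {..<t}"
    unfolding Z_def[abs_def] by (rule rows_indep) auto
  have sum_Z: "(vec_norm t (mat_apply t d G x))\<^sup>2 - (vec_norm d x)\<^sup>2 = (\<Sum>i<t. Z i G)" for G
    unfolding \<sigma>(2)[symmetric] by (simp add: vec_norm_def sum_nonneg Z_def sum_subtractf)
  show "integrable (gauss_jl t d) (\<lambda>G. ((vec_norm t (mat_apply t d G x))\<^sup>2 - (vec_norm d x)\<^sup>2)\<^sup>2)"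
    unfolding sum_Z using Z_indep Z_moments by (intro expectation_square_sum_indep) auto
  have "expectation (\<lambda>G. ((vec_norm t (mat_apply t d G x))\<^sup>2 - (vec_norm d x)\<^sup>2)\<^sup>2) = t * (2 * \<sigma> ^ 4)"
    unfolding sum_Z using Z_indep Z_moments by (subst expectation_square_sum_indep) auto
  also have "\<dots> = 2 * (t * \<sigma>\<^sup>2)\<^sup>2 / t"
    using t_pos by (simp add: power2_eq_square power4_eq_xxxx)
  finally show "expectation (\<lambda>G. ((vec_norm t (mat_apply t d G x))\<^sup>2 - (vec_norm d x)\<^sup>2)\<^sup>2) =
      2 * vec_norm d x ^ 4 / t"
    unfolding \<sigma>(2) by (simp add: power2_eq_square power4_eq_xxxx)
qed

lemma norm_deviation_dominated:
  obtains T where "integrable (gauss_jl t d) T"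
    and "\<And>G. \<bar>vec_norm t (mat_apply t d G x) - vec_norm d x\<bar> \<le> T G"
    and "expectation T \<le> sqrt (2 / t) * vec_norm d x"
proof (cases "0 < vec_norm d x")
  case False
  then have "mat_apply t d G x = (\<lambda>_. 0)" for G
    by (auto simp: vec_norm_pos_iff mat_apply_def fun_eq_iff)
  moreover have "vec_norm d x = 0"
    using False vec_norm_nonneg[of d x] by linarith
  ultimately show ?thesis
    by (intro that[of "\<lambda>_. 0"]) (simp_all add: vec_norm_def)
next
  case True
  define a where "a = vec_norm d x"
  define \<eta> where "\<eta> = sqrt (2 / t)"
    \<comment> \<open>balances the two terms of \<open>abs_sqrt_diff_le\<close> in expectation\<close>
  have \<eta>: "0 < \<eta>" "1 / (\<eta> * t) = \<eta> / 2"
    using t_pos by (simp_all add: \<eta>_def real_sqrt_divide field_simps)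
  define T where "T G = \<eta> * a / 2 + ((vec_norm t (mat_apply t d G x))\<^sup>2 - a\<^sup>2)\<^sup>2 / (2 * \<eta> * a ^ 3)"
    for G
  have "integrable (gauss_jl t d) T"
    using sq_norm_variance(1)[OF True] by (simp add: T_def[abs_def] a_def)
  moreover have "\<bar>vec_norm t (mat_apply t d G x) - vec_norm d x\<bar> \<le> T G" for G
    using abs_sqrt_diff_le[OF True _ \<eta>(1), of "(vec_norm t (mat_apply t d G x))\<^sup>2"]
    by (simp add: T_def a_def vec_norm_nonneg)
  moreover have "expectation T = \<eta> * a / 2 + (2 * a ^ 4 / t) / (2 * \<eta> * a ^ 3)"
    using sq_norm_variance[OF True] by (simp add: T_def[abs_def] a_def prob_space)
  moreover have "\<dots> = \<eta> * a / 2 + a * (1 / (\<eta> * t))"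
    using True \<eta>(1) by (simp add: a_def field_simps power3_eq_cube power4_eq_xxxx)
  moreover have "\<dots> = \<eta> * a"
    unfolding \<eta>(2) by simp
  ultimately show ?thesis
    by (intro that[of T]) (simp_all add: \<eta>_def a_def)
qed

lemma expectation_norm_deviation:
  shows "integrable (gauss_jl t d) (\<lambda>G. \<bar>vec_norm t (mat_apply t d G x) - vec_norm d x\<bar>)"
    and "expectation (\<lambda>G. \<bar>vec_norm t (mat_apply t d G x) - vec_norm d x\<bar>) \<le> sqrt (2 / t) * vec_norm d x"
proof -
  obtain T where T_int: "integrable (gauss_jl t d) T"
    and bound: "\<And>G. \<bar>vec_norm t (mat_apply t d G x) - vec_norm d x\<bar> \<le> T G"
    and T_mean: "expectation T \<le> sqrt (2 / t) * vec_norm d x"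
    using norm_deviation_dominated[where x = x] by blast
  show int: "integrable (gauss_jl t d) (\<lambda>G. \<bar>vec_norm t (mat_apply t d G x) - vec_norm d x\<bar>)"
  proof (rule Bochner_Integration.integrable_bound[OF T_int])
    show "(\<lambda>G. \<bar>vec_norm t (mat_apply t d G x) - vec_norm d x\<bar>) \<in> borel_measurable (gauss_jl t d)"
      unfolding vec_norm_def by measurable
    show "AE G in gauss_jl t d. norm \<bar>vec_norm t (mat_apply t d G x) - vec_norm d x\<bar> \<le> norm (T G)"
    proof (rule AE_I2)
      fix G
      have "\<bar>vec_norm t (mat_apply t d G x) - vec_norm d x\<bar> \<le> \<bar>T G\<bar>"
        using bound[of G] abs_ge_self[of "T G"] by linarith
      then show "norm \<bar>vec_norm t (mat_apply t d G x) - vec_norm d x\<bar> \<le> norm (T G)"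
        by simp
    qed
  qed
  have "expectation (\<lambda>G. \<bar>vec_norm t (mat_apply t d G x) - vec_norm d x\<bar>) \<le> expectation T"
    using int T_int bound by (rule integral_mono)
  with T_mean show "expectation (\<lambda>G. \<bar>vec_norm t (mat_apply t d G x) - vec_norm d x\<bar>) \<le> sqrt (2 / t) * vec_norm d x"
    by linarith
qed

lemma mat_apply_eq_0_null:
  assumes "0 < vec_norm d x" "i < t"
  shows "{G \<in> space (gauss_jl t d). mat_apply t d G x i = 0} \<in> null_sets (gauss_jl t d)"
proof -
  have "{G \<in> space (gauss_jl t d). mat_apply t d G x i = 0} =
      (\<lambda>G. mat_apply t d G x i) -` {0} \<inter> space (gauss_jl t d)"
    by auto
  moreover have "emeasure (gauss_jl t d) ((\<lambda>G. mat_apply t d G x i) -` {0} \<inter> space (gauss_jl t d)) =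
      (\<integral>\<^sup>+y. ennreal (normal_density 0 (vec_norm d x / sqrt t) y) * indicator {0} y \<partial>lborel)"
    by (rule distributed_emeasure[OF row_distributed[OF assms(2,1)]]) simp
  moreover have "\<dots> = 0"
    using AE_lborel_singleton[of "0::real"] by (subst nn_integral_0_iff_AE) (auto elim: AE_mp)
  ultimately have null: "emeasure (gauss_jl t d) {G \<in> space (gauss_jl t d). mat_apply t d G x i = 0} = 0"
    by simp
  have "{G \<in> space (gauss_jl t d). mat_apply t d G x i = 0} \<in> sets (gauss_jl t d)"
    by measurable
  with null show ?thesis
    by (rule null_setsI)
qed

lemma AE_inj_on_mat_apply:
  assumes P: "finite P" "P \<subseteq> vecs d"
  shows "AE G in gauss_jl t d. inj_on (mat_apply t d G) P"
proof (rule AE_I')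
  let ?E = "{(p, q) \<in> P \<times> P. p \<noteq> q}"
  show "(\<Union>(p, q)\<in>?E. {G \<in> space (gauss_jl t d). mat_apply t d G (\<lambda>j. p j - q j) 0 = 0})
      \<in> null_sets (gauss_jl t d)"
  proof (rule null_sets_UN')
    show "countable ?E"
      using P(1) by (auto intro: countable_finite finite_subset[of _ "P \<times> P"])
    fix e assume "e \<in> ?E"
    then obtain p q where e: "e = (p, q)" "p \<in> P" "q \<in> P" "p \<noteq> q"
      by auto
    then have "0 < vec_norm d (\<lambda>j. p j - q j)"
      using P(2) by (intro vec_norm_diff_pos) auto
    then show "(case e of (p, q) \<Rightarrow> {G \<in> space (gauss_jl t d). mat_apply t d G (\<lambda>j. p j - q j) 0 = 0})
        \<in> null_sets (gauss_jl t d)"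
      using t_pos by (simp add: e mat_apply_eq_0_null)
  qed
  show "{G \<in> space (gauss_jl t d). \<not> inj_on (mat_apply t d G) P} \<subseteq>
      (\<Union>(p, q)\<in>?E. {G \<in> space (gauss_jl t d). mat_apply t d G (\<lambda>j. p j - q j) 0 = 0})"
  proof
    fix G assume "G \<in> {G \<in> space (gauss_jl t d). \<not> inj_on (mat_apply t d G) P}"
    then obtain p q where G: "G \<in> space (gauss_jl t d)" and pq: "(p, q) \<in> ?E"
      and eq: "mat_apply t d G p = mat_apply t d G q"
      by (auto simp: inj_on_def)
    have "mat_apply t d G (\<lambda>j. p j - q j) 0 = 0"
      using mat_apply_diff[of t d G p 0 q] eq by simp
    with G pq show "G \<in> (\<Union>(p, q)\<in>?E. {G \<in> space (gauss_jl t d). mat_apply t d G (\<lambda>j. p j - q j) 0 = 0})"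
      by blast
  qed
qed


lemma prob_pairwise_deviation_small:
  fixes \<epsilon> :: real
  assumes P: "finite P" "P \<subseteq> vecs d" "2 \<le> card P" and \<epsilon>: "0 < \<epsilon>" "288 / \<epsilon>\<^sup>2 \<le> t"
  shows "2 / 3 \<le> prob {G \<in> space (gauss_jl t d).
    (\<Sum>p\<in>P. \<Sum>q\<in>P. \<bar>edist t (mat_apply t d G p) (mat_apply t d G q) - edist d p q\<bar>) < \<epsilon> / 4 * dist_sum d P}"
proof (rule prob_less_ge_two_thirds)
  let ?X = "\<lambda>p q G. \<bar>edist t (mat_apply t d G p) (mat_apply t d G q) - edist d p q\<bar>"
  note deviation = expectation_norm_deviation[of "\<lambda>j. p j - q j" for p q, folded edist_mat_apply edist_eq_vec_norm]
  show "integrable (gauss_jl t d) (\<lambda>G. \<Sum>p\<in>P. \<Sum>q\<in>P. ?X p q G)"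
    using deviation(1) by (intro Bochner_Integration.integrable_sum) auto
  show "0 \<le> (\<Sum>p\<in>P. \<Sum>q\<in>P. ?X p q G)" for G
    by (intro sum_nonneg) simp
  show "0 < \<epsilon> / 4 * dist_sum d P"
    using \<epsilon>(1) dist_sum_pos[OF P] by simp
  have "sqrt (2 / t) \<le> sqrt ((\<epsilon> / 12)\<^sup>2)"
    using \<epsilon> t_pos by (simp add: field_simps power2_eq_square)
  then have rate: "sqrt (2 / t) \<le> \<epsilon> / 12"
    using \<epsilon>(1) by simp
  have "expectation (\<lambda>G. \<Sum>p\<in>P. \<Sum>q\<in>P. ?X p q G) = (\<Sum>p\<in>P. \<Sum>q\<in>P. expectation (?X p q))"
    using deviation(1) by (simp add: Bochner_Integration.integral_sum Bochner_Integration.integrable_sum)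
  also have "\<dots> \<le> (\<Sum>p\<in>P. \<Sum>q\<in>P. sqrt (2 / t) * edist d p q)"
    using deviation(2) by (intro sum_mono)
  also have "\<dots> = sqrt (2 / t) * dist_sum d P"
    by (simp add: dist_sum_def sum_distrib_left)
  also have "\<dots> \<le> \<epsilon> / 12 * dist_sum d P"
    using rate dist_sum_nonneg by (rule mult_right_mono)
  finally show "expectation (\<lambda>G. \<Sum>p\<in>P. \<Sum>q\<in>P. ?X p q G) \<le> \<epsilon> / 4 * dist_sum d P / 3"
    by simp
qed

end

lemma prob_opt_max_tsp_approx:
  fixes \<epsilon> :: real
  assumes P: "finite P" "P \<subseteq> vecs d" "2 \<le> card P" and \<epsilon>: "0 < \<epsilon>" "\<epsilon> \<le> 2" "288 / \<epsilon>\<^sup>2 \<le> t"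
  shows "2 / 3 \<le> measure (gauss_jl t d) {G \<in> space (gauss_jl t d).
           opt_max_tsp d P / (2 + \<epsilon>) \<le> opt_max_tsp t (mat_apply t d G ` P) \<and>
           opt_max_tsp t (mat_apply t d G ` P) \<le> (2 + \<epsilon>) * opt_max_tsp d P}"
    (is "_ \<le> measure _ ?S")
proof -
  have "0 < 288 / \<epsilon>\<^sup>2"
    using \<epsilon>(1) by simp
  then have "0 < t"
    using \<epsilon>(3) by linarith
  then interpret gauss_jl_matrix t d
    by unfold_locales
  let ?good = "{G \<in> space (gauss_jl t d).
    (\<Sum>p\<in>P. \<Sum>q\<in>P. \<bar>edist t (mat_apply t d G p) (mat_apply t d G q) - edist d p q\<bar>) < \<epsilon> / 4 * dist_sum d P}"
  have "AE G in gauss_jl t d. G \<in> ?good \<longrightarrow> G \<in> ?S"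
    using AE_inj_on_mat_apply[OF P(1,2)]
  proof eventually_elim
    case (elim G)
    show ?case
    proof
      assume good: "G \<in> ?good"
      have "\<bar>dist_sum t (mat_apply t d G ` P) - dist_sum d P\<bar> \<le> \<epsilon> / 4 * dist_sum d P"
        using dist_sum_image_deviation[OF elim, of t d] good by simp
      then show "G \<in> ?S"
        using good P(1,3) \<epsilon>(1,2) card_image[OF elim]
        by (simp add: opt_max_tsp_approx_of_dist_sum)
    qed
  qed
  moreover have "?S \<in> sets (gauss_jl t d)"
  proof -
    have "(\<lambda>G. opt_max_tsp t (mat_apply t d G ` P)) \<in> borel_measurable (gauss_jl t d)"
      using P(1) by (rule measurable_opt_max_tsp_image) (simp_all add: mat_apply_def)
    then show ?thesis
      by measurable
  qed
  ultimately have "prob ?good \<le> prob ?S"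
    by (rule finite_measure_mono_AE)
  with prob_pairwise_deviation_small[OF P \<epsilon>(1,3)] show ?thesis
    by linarith
qed

lemma target_dimension_ge:
  fixes \<epsilon> :: real
  assumes \<epsilon>: "0 < \<epsilon>" "\<epsilon> < 1"
  shows "288 / \<epsilon>\<^sup>2 \<le> nat \<lceil>500 * \<epsilon> powr (-2) * ln (2 / \<epsilon>)\<rceil>"
proof -
  have "ln 2 \<le> ln (2 / \<epsilon>)"
    using \<epsilon> by (simp add: le_divide_eq)
  then have "2 / 3 \<le> ln (2 / \<epsilon>)"
    using ln2_ge_two_thirds by linarith
  then have "288 / \<epsilon>\<^sup>2 \<le> 500 * \<epsilon> powr (-2) * ln (2 / \<epsilon>)"
    using \<epsilon>(1) by (simp add: powr_minus powr_realpow divide_simps)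
  also have "\<dots> \<le> nat \<lceil>500 * \<epsilon> powr (-2) * ln (2 / \<epsilon>)\<rceil>"
    by (rule real_nat_ceiling_ge)
  finally show ?thesis .
qed

theorem mainTheorem14:
  "\<exists>C>0. \<forall>(\<epsilon>::real) (d::nat) (P::(nat \<Rightarrow> real) set).
     0 < \<epsilon> \<and> \<epsilon> < 1 \<and> finite P \<and> card P \<ge> 3 \<and> P \<subseteq> vecs d \<longrightarrow>
     (let t = nat \<lceil>C * \<epsilon> powr (-2) * ln (2 / \<epsilon>)\<rceil> in
      measure (gauss_jl t d)
        {G \<in> space (gauss_jl t d).
           opt_max_tsp d P / (2 + \<epsilon>) \<le> opt_max_tsp t (mat_apply t d G ` P) \<and>
           opt_max_tsp t (mat_apply t d G ` P) \<le> (2 + \<epsilon>) * opt_max_tsp d P}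
      \<ge> 2 / 3)"
  by (intro exI[of _ "500 :: real"] conjI allI impI, simp, unfold Let_def)
    (intro prob_opt_max_tsp_approx target_dimension_ge; auto)

end
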